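(* Let $g_{ii}(u)$ be a metric of the strictly hyperbolic DN system $u^i_t=v^i(u)u^i_x$, $i=1,\dots,n$, whose curvature tensor has the special form $$R^{ik}_{ik}=w^i_{(1)}+w^k_{(1)}+w^i_{(2)}v^k+w^k_{(2)}v^i,\qquad i\neq k,$$ where $w^i_{(1)},w^i_{(2)}$ are affinors of $g$. Let $B_t=A_x$, $N_t=M_x$ be conservation laws with $BM-AN\neq 0$, and consider the reciprocal transformation $d\hat x=B\,dx+A\,dt$, $d\hat t=N\,dx+M\,dt$. Let $T^{(l)},Z^{(l)}$ ($l=1,2$) be functions with $\partial_iT^{(l)}=w^i_{(l)}\partial_iB$ and $\partial_iZ^{(l)}=w^i_{(l)}\partial_iN$ for all $i$. Define $$n^i=\nabla^i\nabla_iN+w^i_{(1)}N+Z^{(1)}+w^i_{(2)}M+v^iZ^{(2)},\qquad b^i=\nabla^i\nabla_iB+w^i_{(1)}B+T^{(1)}+w^i_{(2)}A+v^iT^{(2)},$$ $$Q=\tfrac12(\nabla B)^2+BT^{(1)}+AT^{(2)},\qquad \mathcal R=\tfrac12(\nabla N)^2+NZ^{(1)}+MZ^{(2)},$$ and let $P,S$ be functions with $$P+S=\langle\nabla N,\nabla B\rangle+T^{(1)}N+T^{(2)}M+Z^{(1)}B+Z^{(2)}A.$$ Set $$\hat n^i=\frac{H_i}{\hat H_i}n^i-P-\hat v^i\mathcal R,\qquad \hat b^i=\frac{H_i}{\hat H_i}b^i-Q-\hat v^iS,$$ where $\hat H_i=\sqrt{\hat g_{ii}}$, so that $H_i/\hat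 H_i=(BM-AN)/(M-Nv^i)$. Then the only possibly nonzero components of the Riemannian curvature tensor of the reciprocal metric $\hat g_{ii}$ are $$\hat R^{ik}_{ik}=\hat n^i\hat v^k+\hat n^k\hat v^i+\hat b^i+\hat b^k,\qquad i\neq k.$$
   Context: Setting: $u=(u^1,\dots,u^n)$ and $u^i_t=v^i(u)u^i_x$, $i=1,\dots,n$, is a hydrodynamic type system in Riemann invariants with smooth real, pairwise distinct characteristic velocities $v^i$ (strict hyperbolicity). We work with smooth rapidly decreasing functions of $x$, so that $(d/dx)^{-1}f_x=f$. The system is an integrable Dubrovin–Novikov (DN) system, i.e. it has a local Hamiltonian structure of hydrodynamic type defined by a flat non-degenerate diagonal metric. Write $\partial_i=\partial/\partial u^i$. A metric of the system is a non-degenerate diagonal metric $g_{ii}(u)$ such that, for suitable functions $f^i(u^i)$ of one variable, $f^ig_{ii}$ is a flat metric of a local Hamiltonian structure of the system. Equivalently, its Lamé coefficients $H_i=\sqrt{g_{ii}}$ satisfy $\partial_j\ln H_i=\partial_jv^i/(v^j-v^i)$ for $i\neq j$. We write $g^{ii}=1/g_{ii}$, and $\Gamma^i_{jk}$ for the Christoffel symbols. For such a metric, the only possibly nonzero curvature components are $R^{ik}_{ik}$, $i\neq k$. An affinor of $g$ is a function $w^i(u)$ with $\partial_jw^i/(w^j-w^i)=\partial_j\ln H_i$ for all $i\neq j$. Conservation law: a pair of functions with $B(u)_t=A(u)_x$ on solutions, i.e. $\partial_iA=v^i\partial_iB$ for all $i$. Reciprocal transformation: $d\hat x=B\,dx+A\,dt$,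 $d\hat t=N\,dx+M\,dt$. The reciprocal system is $u^i_{\hat t}=\hat v^iu^i_{\hat x}$ with $$\hat v^i=\frac{Bv^i-A}{M-Nv^i},$$ and the reciprocal metric is $$\hat g_{ii}=\Big(\frac{M-Nv^i}{BM-AN}\Big)^2g_{ii}.$$ Notation: - $(\nabla B)^2=\sum_mg^{mm}(\partial_mB)^2$; - $\langle\nabla B,\nabla N\rangle=\sum_mg^{mm}\partial_mB\,\partial_mN$; - $\nabla^i\nabla_iB=g^{ii}\big(\partial_i^2B-\sum_m\Gamma^m_{ii}\partial_mB\big)$ (no summation over $i$). *)

theory Defs
  imports "HOL-Analysis.Analysis"
begin

definition pd :: "'n::finite \<Rightarrow> (real^'n \<Rightarrow> real) \<Rightarrow> real^'n \<Rightarrow> real" where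
  "pd i f u = deriv (\<lambda>t. f (u + t *\<^sub>R axis i 1)) 0"

fun iter_pd :: "'n::finite list \<Rightarrow> (real^'n \<Rightarrow> real) \<Rightarrow> real^'n \<Rightarrow> real" where
  "iter_pd [] f = f"
| "iter_pd (i # is) f = pd i (iter_pd is f)"

definition smooth_on :: "(real^'n::finite) set \<Rightarrow> (real^'n \<Rightarrow> real) \<Rightarrow> bool" where
  "smooth_on U f \<longleftrightarrow> (\<forall>is. iter_pd is f differentiable_on U)"

text \<open>A diagonal metric is given by its diagonal entries g i = g_ii.\<close>
definition diag_full :: "('n \<Rightarrow> real^'n \<Rightarrow> real) \<Rightarrow> 'n \<Rightarrow> 'n \<Rightarrow> real^'n \<Rightarrow> real" where
  "diag_full g a b = (if a = b then g a else (\<lambda>_. 0))"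

definition christoffel :: "('n::finite \<Rightarrow> real^'n \<Rightarrow> real) \<Rightarrow> 'n \<Rightarrow> 'n \<Rightarrow> 'n \<Rightarrow> real^'n \<Rightarrow> real" where
  "christoffel g i j k u = 1/2 * (1 / g i u) *
     (pd j (diag_full g i k) u + pd k (diag_full g i j) u - pd i (diag_full g j k) u)"

text \<open>Riemann tensor R^i_{jkl}, with R(d_k,d_l) d_j = R^i_{jkl} d_i.\<close>
definition riemann :: "('n::finite \<Rightarrow> real^'n \<Rightarrow> real) \<Rightarrow> 'n \<Rightarrow> 'n \<Rightarrow> 'n \<Rightarrow> 'n \<Rightarrow> real^'n \<Rightarrow> real" where
  "riemann g i j k l u =
     pd k (christoffel g i l j) u - pd l (christoffel g i k j) u
     + (\<Sum>m\<in>UNIV. christoffel g i k m u * christoffel g m l j u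
                  - christoffel g i l m u * christoffel g m k j u)"

text \<open>Mixed components R^{ij}_{kl} = g^{jj} R^i_{jkl}; in particular R^{ik}_{ik}
  (the sectional curvature of the coordinate plane (i,k); positive for the round sphere).\<close>
definition curv :: "('n::finite \<Rightarrow> real^'n \<Rightarrow> real) \<Rightarrow> 'n \<Rightarrow> 'n \<Rightarrow> 'n \<Rightarrow> 'n \<Rightarrow> real^'n \<Rightarrow> real" where
  "curv g i j k l u = (1 / g j u) * riemann g i j k l u"

text \<open>Lame condition: d_j ln H_i = d_j v^i/(v^j - v^i), with ln H_i = (1/2) ln |g_ii|.\<close>
definition lame_cond :: "(real^'n::finite) set \<Rightarrow> ('n \<Rightarrow> real^'n \<Rightarrow> real) \<Rightarrow> ('n \<Rightarrow> real^'n \<Rightarrow> real) \<Rightarrow> bool" where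
  "lame_cond U v g \<longleftrightarrow> (\<forall>u\<in>U. \<forall>i j. i \<noteq> j \<longrightarrow>
      pd j (g i) u / (2 * g i u) = pd j (v i) u / (v j u - v i u))"

definition diag_metric :: "(real^'n::finite) set \<Rightarrow> ('n \<Rightarrow> real^'n \<Rightarrow> real) \<Rightarrow> bool" where
  "diag_metric U g \<longleftrightarrow> (\<forall>i. smooth_on U (g i)) \<and> (\<forall>u\<in>U. \<forall>i. g i u \<noteq> 0)"

text \<open>A metric of the system (via the Lame characterisation).\<close>
definition metric_of_system where
  "metric_of_system U v g \<longleftrightarrow> diag_metric U g \<and> lame_cond U v g"

definition flat :: "(real^'n::finite) set \<Rightarrow> ('n \<Rightarrow> real^'n \<Rightarrow> real) \<Rightarrow> bool" where
  "flat U g \<longleftrightarrow> (\<forall>u\<in>U. \<forall>i j k l. riemann g i j k l u = 0)"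

definition strictly_hyperbolic where
  "strictly_hyperbolic U v \<longleftrightarrow> (\<forall>i. smooth_on U (v i)) \<and>
     (\<forall>u\<in>U. \<forall>i j. i \<noteq> j \<longrightarrow> v i u \<noteq> v j u)"

text \<open>DN system: it has a local Hamiltonian structure of hydrodynamic type given by a flat
  non-degenerate diagonal metric (Tsarev: Lame condition plus flatness).\<close>
definition DN_system where
  "DN_system U v \<longleftrightarrow> (\<exists>G. metric_of_system U v G \<and> flat U G)"

definition is_affinor :: "(real^'n::finite) set \<Rightarrow> ('n \<Rightarrow> real^'n \<Rightarrow> real) \<Rightarrow> ('n \<Rightarrow> real^'n \<Rightarrow> real) \<Rightarrow> bool" where
  "is_affinor U g w \<longleftrightarrow> (\<forall>i. smooth_on U (w i)) \<and>
     (\<forall>u\<in>U. \<forall>i j. i \<noteq> j \<longrightarrow> pd j (w i) u = (w j u - w i u) * (pd j (g i) u / (2 * g i u)))"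

text \<open>Conservation law B_t = A_x: d_i A = v^i d_i B.\<close>
definition conservation_law where
  "conservation_law U v B A \<longleftrightarrow> smooth_on U B \<and> smooth_on U A \<and>
     (\<forall>u\<in>U. \<forall>i. pd i A u = v i u * pd i B u)"

definition grad_sq :: "('n::finite \<Rightarrow> real^'n \<Rightarrow> real) \<Rightarrow> (real^'n \<Rightarrow> real) \<Rightarrow> real^'n \<Rightarrow> real" where
  "grad_sq g B u = (\<Sum>m\<in>UNIV. (1 / g m u) * (pd m B u)^2)"

definition grad_inner :: "('n::finite \<Rightarrow> real^'n \<Rightarrow> real) \<Rightarrow> (real^'n \<Rightarrow> real) \<Rightarrow> (real^'n \<Rightarrow> real) \<Rightarrow> real^'n \<Rightarrow> real" where
  "grad_inner g B N u = (\<Sum>m\<in>UNIV. (1 / g m u) * pd m B u * pd m N u)"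

text \<open>nabla^i nabla_i B (no summation).\<close>
definition lap_ii :: "('n::finite \<Rightarrow> real^'n \<Rightarrow> real) \<Rightarrow> 'n \<Rightarrow> (real^'n \<Rightarrow> real) \<Rightarrow> real^'n \<Rightarrow> real" where
  "lap_ii g i B u = (1 / g i u) *
     (pd i (pd i B) u - (\<Sum>m\<in>UNIV. christoffel g m i i u * pd m B u))"

definition recip_v where
  "recip_v v B A N M i u = (B u * v i u - A u) / (M u - N u * v i u)"

definition recip_g where
  "recip_g g v B A N M i u =
     ((M u - N u * v i u) / (B u * M u - A u * N u))^2 * g i u"

end

theory Submission
  imports Defs
begin

(* Write alpha_l = M - N v^l, Delta = BM - AN, rho_l = Delta / alpha_l (the ratio H_l / hat-H_l) and
   hat-v^l for the reciprocal velocities, so that hat-g_ll = g_ll / rho_l^2.  For a diagonal metric G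
   let dlnH G l j = d_j G_l / (2 G_l) = d_j ln H_l.  In particular only
   the relation for P + S is used. *)

section \<open>Partial derivatives\<close>

abbreviation ax :: "'n::finite \<Rightarrow> real^'n" where "ax i \<equiv> axis i 1"

lemma pd_DERIV:
  assumes "f differentiable (at x)"
  shows "((\<lambda>t. f (x + t *\<^sub>R ax i)) has_real_derivative pd i f x) (at 0)"
proof -
  have "(\<lambda>t::real. x + t *\<^sub>R ax i) differentiable (at 0)"
    by (intro derivative_intros)
  then have "(\<lambda>t. f (x + t *\<^sub>R ax i)) differentiable (at 0)"
    using differentiable_chain_at[of "\<lambda>t::real. x + t *\<^sub>R ax i" 0 f] assms by (simp add: o_def)
  then show ?thesis
    using DERIV_deriv_iff_real_differentiable unfolding pd_def by blast
qed

lemma pd_eqI: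
  assumes "((\<lambda>t. f (x + t *\<^sub>R ax i)) has_real_derivative D) (at 0)"
  shows "pd i f x = D"
  using assms unfolding pd_def by (rule DERIV_imp_deriv)

lemma pd_const [simp]: "pd i (\<lambda>y. c) x = 0"
  by (rule pd_eqI) (rule DERIV_const)

lemma pd_add [simp]:
  "f differentiable (at x) \<Longrightarrow> g differentiable (at x) \<Longrightarrow>
   pd i (\<lambda>y. f y + g y) x = pd i f x + pd i g x"
  by (rule pd_eqI) (intro DERIV_add pd_DERIV)

lemma pd_diff [simp]:
  "f differentiable (at x) \<Longrightarrow> g differentiable (at x) \<Longrightarrow>
   pd i (\<lambda>y. f y - g y) x = pd i f x - pd i g x"
  by (rule pd_eqI) (intro DERIV_diff pd_DERIV)

lemma pd_minus [simp]:
  "f differentiable (at x) \<Longrightarrow> pd i (\<lambda>y. - f y) x = - pd i f x"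
  by (rule pd_eqI) (intro DERIV_minus pd_DERIV)

lemma pd_mult [simp]:
  "f differentiable (at x) \<Longrightarrow> g differentiable (at x) \<Longrightarrow>
   pd i (\<lambda>y. f y * g y) x = pd i f x * g x + f x * pd i g x"
  by (rule pd_eqI) (rule DERIV_cong[OF DERIV_mult[OF pd_DERIV pd_DERIV]], auto)

lemma pd_divide [simp]:
  "f differentiable (at x) \<Longrightarrow> g differentiable (at x) \<Longrightarrow> g x \<noteq> 0 \<Longrightarrow>
   pd i (\<lambda>y. f y / g y) x = (pd i f x * g x - f x * pd i g x) / (g x)^2"
  by (rule pd_eqI)
    (rule DERIV_cong[OF DERIV_divide[OF pd_DERIV pd_DERIV]], auto simp: power2_eq_square)

lemma pd_local:
  assumes "open U" "x \<in> U" "\<forall>y\<in>U. f y = g y"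
  shows "pd i f x = pd i g x"
proof -
  have "((\<lambda>t::real. x + t *\<^sub>R ax i) \<longlongrightarrow> x + 0 *\<^sub>R ax i) (nhds 0)"
    by (intro tendsto_intros filterlim_ident)
  then have "eventually (\<lambda>t. x + t *\<^sub>R ax i \<in> U) (nhds 0)"
    using assms(1,2) unfolding tendsto_def by simp
  then have "eventually (\<lambda>t. f (x + t *\<^sub>R ax i) = g (x + t *\<^sub>R ax i)) (nhds 0)"
    by eventually_elim (use assms in auto)
  then show ?thesis unfolding pd_def by (rule deriv_cong_ev) simp
qed

lemma line_DERIV_at:
  assumes "f differentiable (at (p + s *\<^sub>R ax k))"
  shows "((\<lambda>t. f (p + t *\<^sub>R ax k)) has_real_derivative pd k f (p + s *\<^sub>R ax k)) (at s)"
proof -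
  have "(\<lambda>t. f ((p + s *\<^sub>R ax k) + t *\<^sub>R ax k)) = (\<lambda>t. f (p + (t + s) *\<^sub>R ax k))"
    by (rule ext) (simp add: algebra_simps scaleR_add_left)
  then have "((\<lambda>t. f (p + (t + s) *\<^sub>R ax k)) has_real_derivative pd k f (p + s *\<^sub>R ax k)) (at 0)"
    using pd_DERIV[OF assms, of k] by simp
  then show ?thesis
    using DERIV_shift[of "\<lambda>t. f (p + t *\<^sub>R ax k)" _ 0 s] by simp
qed

section \<open>Smooth functions\<close>

text \<open>All iterated partial derivatives of order at most k are differentiable on U.
  Smoothness is this property for every k, which allows induction on the order.\<close>

definition differentiable_upto :: "(real^'n::finite) set \<Rightarrow> nat \<Rightarrow> (real^'n \<Rightarrow> real) \<Rightarrow> bool"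
  where "differentiable_upto U k f \<longleftrightarrow> (\<forall>is. length is \<le> k \<longrightarrow> iter_pd is f differentiable_on U)"

lemma smooth_on_upto: "smooth_on U f \<longleftrightarrow> (\<forall>k. differentiable_upto U k f)"
  unfolding smooth_on_def differentiable_upto_def by auto

lemma iter_pd_snoc: "iter_pd (is @ [i]) f = iter_pd is (pd i f)"
  by (induct "is") auto

lemma differentiable_upto_Suc:
  "differentiable_upto U (Suc k) f \<longleftrightarrow>
     f differentiable_on U \<and> (\<forall>i. differentiable_upto U k (pd i f))"
proof
  assume a: "differentiable_upto U (Suc k) f"
  have "iter_pd [] f differentiable_on U"
    using a unfolding differentiable_upto_def by (metis le0 list.size(3))
  moreover have "differentiable_upto U k (pd i f)" for i
    using a unfolding differentiable_upto_def
    by (metis iter_pd_snoc length_append_singleton not_less_eq_eq)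
  ultimately show "f differentiable_on U \<and> (\<forall>i. differentiable_upto U k (pd i f))" by simp
next
  assume a: "f differentiable_on U \<and> (\<forall>i. differentiable_upto U k (pd i f))"
  show "differentiable_upto U (Suc k) f" unfolding differentiable_upto_def
  proof (intro allI impI)
    fix "is" :: "'a list" assume l: "length is \<le> Suc k"
    show "iter_pd is f differentiable_on U"
    proof (cases "is" rule: rev_exhaust)
      case Nil then show ?thesis using a by simp
    next
      case (snoc ys y)
      then show ?thesis
        using a l unfolding differentiable_upto_def by (simp add: iter_pd_snoc)
    qed
  qed
qed

lemma differentiable_upto_mono: "differentiable_upto U (Suc k) f \<Longrightarrow> differentiable_upto U k f"
  unfolding differentiable_upto_def by auto

lemma differentiable_on_cong_open:
  assumes "open U" "\<forall>y\<in>U. f y = g y" "f differentiable_on U"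
  shows "g differentiable_on U"
  unfolding differentiable_on_eq_differentiable_at[OF assms(1)]
proof
  fix y assume y: "y \<in> U"
  then obtain f' where "(f has_derivative f') (at y)"
    using assms(1,3) differentiable_on_eq_differentiable_at unfolding differentiable_def by blast
  then have "(g has_derivative f') (at y)"
    by (rule has_derivative_transform_within_open[OF _ assms(1) y]) (use assms(2) in auto)
  then show "g differentiable (at y)" unfolding differentiable_def by blast
qed

lemma differentiable_upto_cong:
  assumes U: "open U" and eq: "\<forall>y\<in>U. f y = g y" and f: "differentiable_upto U k f"
  shows "differentiable_upto U k g"
  unfolding differentiable_upto_def
proof (intro allI impI)
  fix "is" :: "'a list" assume "length is \<le> k"
  then have "iter_pd is f differentiable_on U" using f unfolding differentiable_upto_def by blast
  moreover have "\<forall>y\<in>U. iter_pd is f y = iter_pd is g y"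
    by (induct "is") (use eq pd_local[OF U] in auto)
  ultimately show "iter_pd is g differentiable_on U"
    using differentiable_on_cong_open[OF U] by blast
qed

lemma differentiable_on_imp_at: "open U \<Longrightarrow> f differentiable_on U \<Longrightarrow> y \<in> U \<Longrightarrow> f differentiable (at y)"
  using differentiable_on_eq_differentiable_at by blast

text \<open>Closure under the field operations, by induction on the order: the partial derivative of a
  sum, product or reciprocal is again built from the operands and their partial derivatives.\<close>

lemma differentiable_upto_const:
  fixes U :: "(real^'n::finite) set"
  shows "differentiable_upto U k (\<lambda>y. c)"
proof (induct k arbitrary: c)
  case 0 then show ?case by (simp add: differentiable_upto_def)
next
  case (Suc k c)
  have "pd i (\<lambda>y::real^'n. c) = (\<lambda>y. 0)" for i by (rule ext) simp
  then have "differentiable_upto U k (pd i (\<lambda>y. c))" for i using Suc[of 0] by metis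
  then show ?case unfolding differentiable_upto_Suc by simp
qed

lemma differentiable_upto_add:
  assumes U: "open U"
  shows "differentiable_upto U k f \<Longrightarrow> differentiable_upto U k g \<Longrightarrow>
    differentiable_upto U k (\<lambda>y. f y + g y)"
proof (induct k arbitrary: f g)
  case 0 then show ?case by (simp add: differentiable_upto_def differentiable_on_add)
next
  case (Suc k)
  then have f: "f differentiable_on U" "\<And>i. differentiable_upto U k (pd i f)"
    and g: "g differentiable_on U" "\<And>i. differentiable_upto U k (pd i g)"
    by (auto simp: differentiable_upto_Suc)
  have "differentiable_upto U k (pd i (\<lambda>y. f y + g y))" for i
    by (rule differentiable_upto_cong[OF U _ Suc.hyps[OF f(2)[of i] g(2)[of i]]])
      (use differentiable_on_imp_at[OF U f(1)] differentiable_on_imp_at[OF U g(1)] in simp)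
  then show ?case using f g by (simp add: differentiable_upto_Suc differentiable_on_add)
qed

lemma differentiable_upto_minus:
  assumes U: "open U"
  shows "differentiable_upto U k f \<Longrightarrow> differentiable_upto U k (\<lambda>y. - f y)"
proof (induct k arbitrary: f)
  case 0 then show ?case by (simp add: differentiable_upto_def differentiable_on_minus)
next
  case (Suc k)
  then have f: "f differentiable_on U" "\<And>i. differentiable_upto U k (pd i f)"
    by (auto simp: differentiable_upto_Suc)
  have "differentiable_upto U k (pd i (\<lambda>y. - f y))" for i
    by (rule differentiable_upto_cong[OF U _ Suc.hyps[OF f(2)[of i]]])
      (use differentiable_on_imp_at[OF U f(1)] in simp)
  then show ?case using f by (simp add: differentiable_upto_Suc differentiable_on_minus)
qed

lemma differentiable_upto_mult:
  assumes U: "open U"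
  shows "differentiable_upto U k f \<Longrightarrow> differentiable_upto U k g \<Longrightarrow>
    differentiable_upto U k (\<lambda>y. f y * g y)"
proof (induct k arbitrary: f g)
  case 0 then show ?case by (simp add: differentiable_upto_def differentiable_on_mult)
next
  case (Suc k)
  then have f: "f differentiable_on U" "\<And>i. differentiable_upto U k (pd i f)" "differentiable_upto U k f"
    and g: "g differentiable_on U" "\<And>i. differentiable_upto U k (pd i g)" "differentiable_upto U k g"
    by (auto simp: differentiable_upto_Suc intro: differentiable_upto_mono)
  have "differentiable_upto U k (pd i (\<lambda>y. f y * g y))" for i
    by (rule differentiable_upto_cong[OF U _
          differentiable_upto_add[OF U Suc.hyps[OF f(2)[of i] g(3)] Suc.hyps[OF f(3) g(2)[of i]]]])
      (use differentiable_on_imp_at[OF U f(1)] differentiable_on_imp_at[OF U g(1)] in simp)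
  then show ?case using f g by (simp add: differentiable_upto_Suc differentiable_on_mult)
qed

lemma differentiable_upto_inverse:
  assumes U: "open U" and nz: "\<forall>y\<in>U. f y \<noteq> 0"
  shows "differentiable_upto U k f \<Longrightarrow> differentiable_upto U k (\<lambda>y. 1 / f y)"
proof (induct k)
  case 0
  then show ?case
    using nz differentiable_on_imp_at[OF U] by (simp add: differentiable_upto_def differentiable_on_eq_differentiable_at[OF U])
next
  case (Suc k)
  then have f: "f differentiable_on U" "\<And>i. differentiable_upto U k (pd i f)" "differentiable_upto U k f"
    by (auto simp: differentiable_upto_Suc intro: differentiable_upto_mono)
  have "differentiable_upto U k (pd i (\<lambda>y. 1 / f y))" for i
  proof (rule differentiable_upto_cong[OF U _ differentiable_upto_minus[OF U
          differentiable_upto_mult[OF U f(2)[of i] differentiable_upto_mult[OF U Suc.hyps Suc.hyps]]]])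
    show "\<forall>y\<in>U. - (pd i f y * (1 / f y * (1 / f y))) = pd i (\<lambda>y. 1 / f y) y"
    proof
      fix y assume "y \<in> U"
      then have "pd i (\<lambda>y. 1 / f y) y = (0 * f y - 1 * pd i f y) / (f y)^2"
        using pd_divide[of "\<lambda>y. 1" y f i] differentiable_on_imp_at[OF U f(1)] nz by simp
      then show "- (pd i f y * (1 / f y * (1 / f y))) = pd i (\<lambda>y. 1 / f y) y"
        by (simp add: power2_eq_square)
    qed
  qed (use f in auto)
  moreover have "(\<lambda>y. 1 / f y) differentiable_on U"
    using nz f(1) differentiable_on_imp_at[OF U] by (simp add: differentiable_on_eq_differentiable_at[OF U])
  ultimately show ?case unfolding differentiable_upto_Suc by blast
qed

lemma smooth_const: "smooth_on U (\<lambda>y. c)"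
  unfolding smooth_on_upto using differentiable_upto_const by blast

lemma smooth_add: "open U \<Longrightarrow> smooth_on U f \<Longrightarrow> smooth_on U g \<Longrightarrow> smooth_on U (\<lambda>y. f y + g y)"
  unfolding smooth_on_upto using differentiable_upto_add by blast

lemma smooth_minus: "open U \<Longrightarrow> smooth_on U f \<Longrightarrow> smooth_on U (\<lambda>y. - f y)"
  unfolding smooth_on_upto using differentiable_upto_minus by blast

lemma smooth_mult: "open U \<Longrightarrow> smooth_on U f \<Longrightarrow> smooth_on U g \<Longrightarrow> smooth_on U (\<lambda>y. f y * g y)"
  unfolding smooth_on_upto using differentiable_upto_mult by blast

lemma smooth_inverse:
  "open U \<Longrightarrow> \<forall>y\<in>U. f y \<noteq> 0 \<Longrightarrow> smooth_on U f \<Longrightarrow> smooth_on U (\<lambda>y. 1 / f y)"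
  unfolding smooth_on_upto using differentiable_upto_inverse by blast

lemma smooth_diff: "open U \<Longrightarrow> smooth_on U f \<Longrightarrow> smooth_on U g \<Longrightarrow> smooth_on U (\<lambda>y. f y - g y)"
  using smooth_add[of U f "\<lambda>y. - g y"] smooth_minus[of U g] by simp

lemma smooth_divide:
  "open U \<Longrightarrow> \<forall>y\<in>U. g y \<noteq> 0 \<Longrightarrow> smooth_on U f \<Longrightarrow> smooth_on U g \<Longrightarrow> smooth_on U (\<lambda>y. f y / g y)"
  using smooth_mult[of U f "\<lambda>y. 1 / g y"] smooth_inverse[of U g] by simp

lemma smooth_pd: "smooth_on U f \<Longrightarrow> smooth_on U (pd i f)"
  unfolding smooth_on_upto using differentiable_upto_Suc by blast

lemma smooth_imp_differentiable: "open U \<Longrightarrow> smooth_on U f \<Longrightarrow> y \<in> U \<Longrightarrow> f differentiable (at y)"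
  unfolding smooth_on_def using differentiable_on_imp_at iter_pd.simps(1) by metis

section \<open>Symmetry of second partial derivatives\<close>

lemma second_difference_mvt:
  fixes f :: "real^'n::finite \<Rightarrow> real"
  assumes f: "\<And>y. y \<in> U \<Longrightarrow> f differentiable (at y)"
    and fa: "\<And>y. y \<in> U \<Longrightarrow> pd a f differentiable (at y)"
    and square: "\<And>s t. 0 \<le> s \<Longrightarrow> s \<le> h \<Longrightarrow> 0 \<le> t \<Longrightarrow> t \<le> h \<Longrightarrow> x + s *\<^sub>R ax a + t *\<^sub>R ax b \<in> U"
    and h: "0 < h"
  shows "\<exists>\<xi> \<eta>. 0 < \<xi> \<and> \<xi> < h \<and> 0 < \<eta> \<and> \<eta> < h \<and>
    f (x + h *\<^sub>R ax a + h *\<^sub>R ax b) - f (x + h *\<^sub>R ax a) - f (x + h *\<^sub>R ax b) + f x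
      = h^2 * pd b (pd a f) (x + \<xi> *\<^sub>R ax a + \<eta> *\<^sub>R ax b)"
proof -
  define \<phi> where "\<phi> s = f (x + h *\<^sub>R ax b + s *\<^sub>R ax a) - f (x + s *\<^sub>R ax a)" for s
  have "\<exists>\<xi>. 0 < \<xi> \<and> \<xi> < h \<and> \<phi> h - \<phi> 0 = (h - 0) *
           (pd a f (x + h *\<^sub>R ax b + \<xi> *\<^sub>R ax a) - pd a f (x + \<xi> *\<^sub>R ax a))"
    unfolding \<phi>_def
  proof (rule MVT2[OF h])
    fix s assume s: "0 \<le> s" "s \<le> h"
    have "x + h *\<^sub>R ax b + s *\<^sub>R ax a \<in> U" "x + s *\<^sub>R ax a \<in> U"
      using square[of s h] square[of s 0] s h by (simp_all add: add_ac)
    then show "((\<lambda>s. f (x + h *\<^sub>R ax b + s *\<^sub>R ax a) - f (x + s *\<^sub>R ax a)) has_real_derivative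
          pd a f (x + h *\<^sub>R ax b + s *\<^sub>R ax a) - pd a f (x + s *\<^sub>R ax a)) (at s)"
      by (intro DERIV_diff line_DERIV_at f)
  qed
  then obtain \<xi> where \<xi>: "0 < \<xi>" "\<xi> < h"
    "\<phi> h - \<phi> 0 = h * (pd a f (x + \<xi> *\<^sub>R ax a + h *\<^sub>R ax b) - pd a f (x + \<xi> *\<^sub>R ax a + 0 *\<^sub>R ax b))"
    by (auto simp: add_ac)
  have "\<exists>\<eta>. 0 < \<eta> \<and> \<eta> < h \<and>
      pd a f (x + \<xi> *\<^sub>R ax a + h *\<^sub>R ax b) - pd a f (x + \<xi> *\<^sub>R ax a + 0 *\<^sub>R ax b)
        = (h - 0) * pd b (pd a f) (x + \<xi> *\<^sub>R ax a + \<eta> *\<^sub>R ax b)"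
  proof (rule MVT2[OF h])
    fix t assume "0 \<le> t" "t \<le> h"
    then show "((\<lambda>t. pd a f (x + \<xi> *\<^sub>R ax a + t *\<^sub>R ax b)) has_real_derivative
        pd b (pd a f) (x + \<xi> *\<^sub>R ax a + t *\<^sub>R ax b)) (at t)"
      using \<xi> by (intro line_DERIV_at fa square) auto
  qed
  then obtain \<eta> where \<eta>: "0 < \<eta>" "\<eta> < h"
    "pd a f (x + \<xi> *\<^sub>R ax a + h *\<^sub>R ax b) - pd a f (x + \<xi> *\<^sub>R ax a + 0 *\<^sub>R ax b)
       = h * pd b (pd a f) (x + \<xi> *\<^sub>R ax a + \<eta> *\<^sub>R ax b)"
    by auto
  have "f (x + h *\<^sub>R ax a + h *\<^sub>R ax b) - f (x + h *\<^sub>R ax a) - f (x + h *\<^sub>R ax b) + f x = \<phi> h - \<phi> 0"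
    unfolding \<phi>_def by (simp add: add_ac)
  also have "\<dots> = h^2 * pd b (pd a f) (x + \<xi> *\<^sub>R ax a + \<eta> *\<^sub>R ax b)"
    unfolding \<xi>(3) \<eta>(3) by (simp add: power2_eq_square)
  finally show ?thesis using \<xi> \<eta> by blast
qed

lemma second_difference_limit:
  fixes f :: "real^'n::finite \<Rightarrow> real"
  assumes U: "open U" and x: "x \<in> U" and f: "smooth_on U f"
  shows "((\<lambda>h. (f (x + h *\<^sub>R ax a + h *\<^sub>R ax b) - f (x + h *\<^sub>R ax a) - f (x + h *\<^sub>R ax b) + f x) / h^2)
          \<longlongrightarrow> pd b (pd a f) x) (at_right 0)"
  unfolding tendsto_iff
proof (intro allI impI)
  let ?G = "pd b (pd a f)"
  fix e :: real assume e: "e > 0"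
  obtain r where r: "r > 0" "ball x r \<subseteq> U" using U x open_contains_ball by blast
  have "isCont ?G x"
    using smooth_imp_differentiable[OF U smooth_pd[OF smooth_pd[OF f]] x] differentiable_imp_continuous_within
    by blast
  then obtain d where d: "d > 0" "\<And>y. dist y x < d \<Longrightarrow> dist (?G y) (?G x) < e"
    using e unfolding continuous_at_eps_delta by blast
  have near: "dist (x + s *\<^sub>R ax a + t *\<^sub>R ax b) x \<le> s + t" if "0 \<le> s" "0 \<le> t" for s t
  proof -
    have "norm (s *\<^sub>R ax a + t *\<^sub>R ax b) \<le> norm (s *\<^sub>R ax a) + norm (t *\<^sub>R ax b)"
      by (rule norm_triangle_ineq)
    then show ?thesis using that by (simp add: dist_norm add.assoc)
  qed
  show "eventually (\<lambda>h. dist ((f (x + h *\<^sub>R ax a + h *\<^sub>R ax b) - f (x + h *\<^sub>R ax a)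
      - f (x + h *\<^sub>R ax b) + f x) / h^2) (?G x) < e) (at_right 0)"
    unfolding eventually_at_right_field
  proof (intro exI[of _ "min (r/2) (d/2)"] conjI allI impI)
    show "0 < min (r/2) (d/2)" using r d by simp
    fix h :: real assume h: "0 < h" "h < min (r/2) (d/2)"
    have "x + s *\<^sub>R ax a + t *\<^sub>R ax b \<in> U" if "0 \<le> s" "s \<le> h" "0 \<le> t" "t \<le> h" for s t
      using near[of s t] that h r by (auto simp: dist_commute)
    then obtain \<xi> \<eta> where \<xi>\<eta>: "0 < \<xi>" "\<xi> < h" "0 < \<eta>" "\<eta> < h"
      "f (x + h *\<^sub>R ax a + h *\<^sub>R ax b) - f (x + h *\<^sub>R ax a) - f (x + h *\<^sub>R ax b) + f x
         = h^2 * ?G (x + \<xi> *\<^sub>R ax a + \<eta> *\<^sub>R ax b)"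
      using second_difference_mvt[where x=x and a=a and b=b,
          OF smooth_imp_differentiable[OF U f] smooth_imp_differentiable[OF U smooth_pd[OF f]] _ h(1)] by blast
    have "dist (?G (x + \<xi> *\<^sub>R ax a + \<eta> *\<^sub>R ax b)) (?G x) < e"
      using near[of \<xi> \<eta>] \<xi>\<eta> h by (intro d(2)) auto
    then show "dist ((f (x + h *\<^sub>R ax a + h *\<^sub>R ax b) - f (x + h *\<^sub>R ax a) - f (x + h *\<^sub>R ax b)
        + f x) / h^2) (?G x) < e"
      unfolding \<xi>\<eta>(5) using h by simp
  qed
qed

lemma clairaut:
  fixes f :: "real^'n::finite \<Rightarrow> real"
  assumes U: "open U" and x: "x \<in> U" and f: "smooth_on U f"
  shows "pd k (pd l f) x = pd l (pd k f) x"
proof -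
  have swap: "(\<lambda>h. (f (x + h *\<^sub>R ax l + h *\<^sub>R ax k) - f (x + h *\<^sub>R ax l) - f (x + h *\<^sub>R ax k) + f x) / h^2)
     = (\<lambda>h. (f (x + h *\<^sub>R ax k + h *\<^sub>R ax l) - f (x + h *\<^sub>R ax k) - f (x + h *\<^sub>R ax l) + f x) / h^2)"
    by (rule ext) (simp add: add_ac)
  show ?thesis
    using tendsto_unique[OF _ second_difference_limit[OF U x f, of l k, unfolded swap]
        second_difference_limit[OF U x f, of k l]]
    by simp
qed

section \<open>Diagonal metrics\<close>

text \<open>For a diagonal metric G (with G l = g_ll = H_l^2) the basic quantity is the logarithmic
  derivative d_j ln H_l of the Lame coefficients.\<close>

definition dlnH :: "('n::finite \<Rightarrow> real^'n \<Rightarrow> real) \<Rightarrow> 'n \<Rightarrow> 'n \<Rightarrow> real^'n \<Rightarrow> real" where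
  "dlnH G l j x = pd j (G l) x / (2 * G l x)"

lemma christoffel_diag:
  "christoffel G i j k x =
     (if j = i then dlnH G i k x else if k = i then dlnH G i j x
      else if j = k then - pd i (G j) x / (2 * G i x) else 0)"
  unfolding christoffel_def diag_full_def dlnH_def by (auto simp: field_simps)

lemma sum_split2:
  fixes F :: "'n::finite \<Rightarrow> real"
  assumes "i \<noteq> k"
  shows "sum F UNIV = F i + F k + sum F (UNIV - {i, k})"
proof -
  have "sum F UNIV = F i + F k + sum F (UNIV - {i} - {k})"
    using assms by (simp add: sum.remove[of UNIV i] sum.remove[of "UNIV - {i}" k])
  moreover have "UNIV - {i} - {k} = UNIV - {i, k}" by auto
  ultimately show ?thesis by simp
qed

text \<open>The combination (d_i d_i H_k - d_i ln H_i d_i H_k) / H_k, the diagonal part of the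
  curvature component R^{ik}_{ik}.\<close>

definition lame_second :: "('n::finite \<Rightarrow> real^'n \<Rightarrow> real) \<Rightarrow> 'n \<Rightarrow> 'n \<Rightarrow> real^'n \<Rightarrow> real" where
  "lame_second G k i x = pd i (dlnH G k i) x + (dlnH G k i x)^2 - dlnH G k i x * dlnH G i i x"

lemma curv_ikik_formula:
  assumes ik: "i \<noteq> k"
    and d: "G i differentiable (at x)" "G k differentiable (at x)"
       "pd i (G k) differentiable (at x)" "pd k (G i) differentiable (at x)"
    and nz: "\<And>m. G m x \<noteq> 0"
  shows "curv G i k i k x = - lame_second G k i x / G i x - lame_second G i k x / G k x
     - (\<Sum>m\<in>UNIV - {i, k}. dlnH G i m x * dlnH G k m x / G m x)"
proof -
  have Gamma_ikk: "christoffel G i k k = (\<lambda>x. - pd i (G k) x / (2 * G i x))"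
    using ik by (intro ext) (simp add: christoffel_diag)
  have d2: "(\<lambda>y. 2 * G i y) differentiable (at x)" "(\<lambda>y. 2 * G k y) differentiable (at x)"
     "(\<lambda>y. - pd i (G k) y) differentiable (at x)" using d by auto
  have p1: "pd i (christoffel G i k k) x =
      - ((pd i (pd i (G k)) x * (2 * G i x) - pd i (G k) x * (2 * pd i (G i) x)) / (2 * G i x)^2)"
    unfolding Gamma_ikk using d d2 nz by simp
  have p2: "pd i (dlnH G k i) x =
      (pd i (pd i (G k)) x * (2 * G k x) - pd i (G k) x * (2 * pd i (G k) x)) / (2 * G k x)^2"
    unfolding dlnH_def[abs_def] using d d2 nz by simp
  have p3: "christoffel G i i k = dlnH G i k" by (intro ext) (simp add: christoffel_diag)
  have S: "(\<Sum>m\<in>UNIV. christoffel G i i m x * christoffel G m k k x - christoffel G i k m x * christoffel G m i k x)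
     = (dlnH G i i x * (- pd i (G k) x / (2 * G i x)) - dlnH G i k x * dlnH G i k x)
       + (dlnH G i k x * dlnH G k k x - (- pd i (G k) x / (2 * G i x)) * dlnH G k i x)
       + (\<Sum>m\<in>UNIV - {i, k}. dlnH G i m x * (- pd m (G k) x / (2 * G m x)))"
    unfolding sum_split2[OF ik] using ik
    by (intro arg_cong2[where f="(+)"] sum.cong) (auto simp: christoffel_diag)
  have S2: "(\<Sum>m\<in>UNIV - {i, k}. dlnH G i m x * (- pd m (G k) x / (2 * G m x)))
      = - G k x * (\<Sum>m\<in>UNIV - {i, k}. dlnH G i m x * dlnH G k m x / G m x)"
    unfolding sum_distrib_left
    by (rule sum.cong) (use nz in \<open>auto simp: dlnH_def field_simps\<close>)
  show ?thesis
    unfolding curv_def riemann_def lame_second_def p1 p3 S S2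
    using nz[of i] nz[of k] unfolding p2 dlnH_def
    by (simp add: field_simps power2_eq_square)
qed

lemma lap_ii_expand:
  assumes nz: "\<And>m. g m x \<noteq> 0"
  shows "lap_ii g i F x = (pd i (pd i F) x - dlnH g i i x * pd i F x) / g i x
     + (\<Sum>m\<in>UNIV - {i}. dlnH g i m x * pd m F x / g m x)"
proof -
  have "(\<Sum>m\<in>UNIV - {i}. christoffel g m i i x * pd m F x)
      = - g i x * (\<Sum>m\<in>UNIV - {i}. dlnH g i m x * pd m F x / g m x)"
    unfolding sum_distrib_left
    by (rule sum.cong) (use nz in \<open>auto simp: christoffel_diag dlnH_def field_simps\<close>)
  then show ?thesis
    unfolding lap_ii_def sum.remove[of UNIV i, simplified] using nz[of i]
    by (simp add: christoffel_diag field_simps)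
qed

lemma dlnH_rescale:
  assumes d: "f l differentiable (at x)" "G l differentiable (at x)"
    and nz: "f l x \<noteq> 0" "G l x \<noteq> 0"
  shows "dlnH (\<lambda>l y. (f l y)^2 * G l y) l j x = dlnH G l j x + pd j (f l) x / f l x"
proof -
  have "pd j (\<lambda>y. (f l y)^2 * G l y) x = 2 * f l x * pd j (f l) x * G l x + (f l x)^2 * pd j (G l) x"
    using d by (simp add: power2_eq_square)
  then show ?thesis using nz unfolding dlnH_def by (simp add: field_simps power2_eq_square)
qed

lemma smooth_dlnH:
  "open U \<Longrightarrow> smooth_on U (G l) \<Longrightarrow> \<forall>y\<in>U. G l y \<noteq> 0 \<Longrightarrow> smooth_on U (dlnH G l j)"
  unfolding dlnH_def[abs_def]
  by (intro smooth_divide smooth_mult smooth_const smooth_pd) auto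

lemma riemann_antisym: "riemann G i j k l x = - riemann G i j l k x"
  unfolding riemann_def by (simp add: sum_subtractf)

section \<open>Metrics satisfying the Lame equations\<close>

locale lame_system =
  fixes U :: "(real^'n::finite) set" and G V :: "'n \<Rightarrow> real^'n \<Rightarrow> real"
  assumes U: "open U"
    and smooth_G: "\<And>m. smooth_on U (G m)" and smooth_V: "\<And>m. smooth_on U (V m)"
    and G_nz: "\<And>y m. y \<in> U \<Longrightarrow> G m y \<noteq> 0"
    and V_distinct: "\<And>y i j. y \<in> U \<Longrightarrow> i \<noteq> j \<Longrightarrow> V i y \<noteq> V j y"
    and lame: "lame_cond U V G"
begin

lemma diff_G: "y \<in> U \<Longrightarrow> G m differentiable (at y)"
  and diff_V: "y \<in> U \<Longrightarrow> V m differentiable (at y)"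
  and diff_pd_G: "y \<in> U \<Longrightarrow> pd j (G m) differentiable (at y)"
  and diff_pd_V: "y \<in> U \<Longrightarrow> pd j (V m) differentiable (at y)"
  using smooth_imp_differentiable[OF U] smooth_G smooth_V smooth_pd by blast+

lemma dlnH_lame: "y \<in> U \<Longrightarrow> i \<noteq> j \<Longrightarrow> dlnH G i j y = pd j (V i) y / (V j y - V i y)"
  using lame unfolding lame_cond_def dlnH_def by blast

lemma pd_dlnH:
  assumes "x \<in> U"
  shows "pd l (dlnH G i j) x
    = (pd l (pd j (G i)) x * (2 * G i x) - pd j (G i) x * (2 * pd l (G i) x)) / (2 * G i x)^2"
  using diff_G[OF assms] diff_pd_G[OF assms] G_nz[OF assms] unfolding dlnH_def[abs_def] by simp

lemma pd_dlnH_lame: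
  assumes x: "x \<in> U" and ij: "i \<noteq> j"
  shows "pd l (dlnH G i j) x = (pd l (pd j (V i)) x * (V j x - V i x)
     - pd j (V i) x * (pd l (V j) x - pd l (V i) x)) / (V j x - V i x)^2"
proof -
  have "pd l (dlnH G i j) x = pd l (\<lambda>y. pd j (V i) y / (V j y - V i y)) x"
    by (rule pd_local[OF U x]) (use dlnH_lame ij in auto)
  then show ?thesis using diff_pd_V[OF x] diff_V[OF x] V_distinct[OF x ij] by simp
qed

text \<open>It follows by comparing the two expressions for d_l d_j V_i coming from the Lame
  equations with the symmetry d_l dlnH_ij = d_j dlnH_il of the mixed derivatives of G.\<close>

lemma tsarev:
  assumes x: "x \<in> U" and d: "i \<noteq> j" "i \<noteq> l" "j \<noteq> l"
  shows "pd l (dlnH G i j) x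
    = dlnH G i l x * dlnH G l j x + dlnH G i j x * dlnH G j l x - dlnH G i l x * dlnH G i j x"
proof -
  have sym: "pd l (dlnH G i j) x = pd j (dlnH G i l) x"
    unfolding pd_dlnH[OF x] clairaut[OF U x smooth_G] by (simp add: algebra_simps)
  define X where "X = pd l (dlnH G i j) x"
  define W where "W = pd l (pd j (V i)) x"
  have nz: "V j x - V i x \<noteq> 0" "V l x - V i x \<noteq> 0" "V j x - V l x \<noteq> 0"
    using V_distinct[OF x] d by auto
  have l1: "pd j (V i) x = dlnH G i j x * (V j x - V i x)"
    and l2: "pd l (V i) x = dlnH G i l x * (V l x - V i x)"
    and l3: "pd l (V j) x = dlnH G j l x * (V l x - V j x)"
    and l4: "pd j (V l) x = dlnH G l j x * (V j x - V l x)"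
    using dlnH_lame[OF x] d nz by (auto simp: field_simps)
  have "X * (V j x - V i x)^2 = W * (V j x - V i x) - pd j (V i) x * (pd l (V j) x - pd l (V i) x)"
    using pd_dlnH_lame[OF x d(1), of l] nz unfolding X_def W_def by (simp add: field_simps)
  then have "(X * (V j x - V i x) + dlnH G i j x * (pd l (V j) x - pd l (V i) x) - W) * (V j x - V i x) = 0"
    unfolding l1 by algebra
  then have f1: "W = X * (V j x - V i x) + dlnH G i j x * (pd l (V j) x - pd l (V i) x)"
    using nz by simp
  have "X * (V l x - V i x)^2 = W * (V l x - V i x) - pd l (V i) x * (pd j (V l) x - pd j (V i) x)"
    using pd_dlnH_lame[OF x d(2), of j] nz unfolding X_def W_def sym clairaut[OF U x smooth_V]
    by (simp add: field_simps)
  then have "(X * (V l x - V i x) + dlnH G i l x * (pd j (V l) x - pd j (V i) x) - W) * (V l x - V i x) = 0"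
    unfolding l2 by algebra
  then have f2: "W = X * (V l x - V i x) + dlnH G i l x * (pd j (V l) x - pd j (V i) x)"
    using nz by simp
  have "X * (V j x - V l x)
      = (dlnH G i l x * dlnH G l j x + dlnH G i j x * dlnH G j l x - dlnH G i l x * dlnH G i j x) * (V j x - V l x)"
    using f1 f2 unfolding l1 l2 l3 l4 by (simp add: algebra_simps)
  then show ?thesis using nz(3) unfolding X_def by simp
qed

lemma riemann_iikl:
  assumes x: "x \<in> U"
  shows "riemann G i i k l x = 0"
proof (cases "k = l")
  case False
  have "pd k (dlnH G i l) x - pd l (dlnH G i k) x = 0"
    unfolding pd_dlnH[OF x] clairaut[OF U x smooth_G, of k l] by (simp add: algebra_simps)
  moreover have "christoffel G i k m x * christoffel G m l i x
      - christoffel G i l m x * christoffel G m k i x = 0" for m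
    using False by (auto simp: christoffel_diag dlnH_def mult_ac)
  moreover have "christoffel G i j i = dlnH G i j" for j
    by (intro ext) (simp add: christoffel_diag)
  ultimately show ?thesis unfolding riemann_def by simp
qed (simp add: riemann_def)

lemma christoffel_distinct: "i \<noteq> l \<Longrightarrow> i \<noteq> j \<Longrightarrow> l \<noteq> j \<Longrightarrow> christoffel G i l j = (\<lambda>_. 0)"
  by (rule ext) (simp add: christoffel_diag)

lemma riemann_ijil:
  assumes x: "x \<in> U" and d: "i \<noteq> j" "i \<noteq> l" "j \<noteq> l"
  shows "riemann G i j i l x = 0"
proof -
  have "christoffel G i i m x * christoffel G m l j x - christoffel G i l m x * christoffel G m i j x
     = (if m = l then dlnH G i l x * dlnH G l j x else 0) + (if m = j then dlnH G i j x * dlnH G j l x else 0)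
       - (if m = i then dlnH G i l x * dlnH G i j x else 0)" for m
    using d by (auto simp: christoffel_diag)
  then have "(\<Sum>m\<in>UNIV. christoffel G i i m x * christoffel G m l j x - christoffel G i l m x * christoffel G m i j x)
     = dlnH G i l x * dlnH G l j x + dlnH G i j x * dlnH G j l x - dlnH G i l x * dlnH G i j x"
    by (simp add: sum.distrib sum_subtractf)
  moreover have "christoffel G i i j = dlnH G i j" by (intro ext) (simp add: christoffel_diag)
  ultimately show ?thesis
    unfolding riemann_def christoffel_distinct[OF d(2) d(1) d(3)[symmetric]] using tsarev[OF x d] by simp
qed

lemma riemann_ijjl:
  assumes x: "x \<in> U" and d: "i \<noteq> j" "i \<noteq> l" "j \<noteq> l"
  shows "riemann G i j j l x = 0"
proof -
  have "christoffel G i j m x * christoffel G m l j x - christoffel G i l m x * christoffel G m j j x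
     = (if m = j then (- pd i (G j) x / (2 * G i x)) * dlnH G j l x else 0)
       + (if m = i then dlnH G i l x * (pd i (G j) x / (2 * G i x)) else 0)
       - (if m = l then (- pd i (G l) x / (2 * G i x)) * (- pd l (G j) x / (2 * G l x)) else 0)" for m
    using d by (auto simp: christoffel_diag)
  then have S: "(\<Sum>m\<in>UNIV. christoffel G i j m x * christoffel G m l j x - christoffel G i l m x * christoffel G m j j x)
     = (- pd i (G j) x / (2 * G i x)) * dlnH G j l x + dlnH G i l x * (pd i (G j) x / (2 * G i x))
       - (- pd i (G l) x / (2 * G i x)) * (- pd l (G j) x / (2 * G l x))"
    by (simp add: sum.distrib sum_subtractf)
  have Gamma_ijj: "christoffel G i j j = (\<lambda>x. - pd i (G j) x / (2 * G i x))"
    using d by (intro ext) (simp add: christoffel_diag)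
  have "(\<lambda>y. 2 * G i y) differentiable (at x)" "(\<lambda>y. - pd i (G j) y) differentiable (at x)"
    using diff_G[OF x] diff_pd_G[OF x] by auto
  then have P: "pd l (christoffel G i j j) x =
      - ((pd l (pd i (G j)) x * (2 * G i x) - pd i (G j) x * (2 * pd l (G i) x)) / (2 * G i x)^2)"
    unfolding Gamma_ijj using diff_G[OF x] diff_pd_G[OF x] G_nz[OF x] by simp
  have nz: "G i x \<noteq> 0" "G j x \<noteq> 0" "G l x \<noteq> 0" using G_nz[OF x] by auto
  define R where "R = dlnH G j l x * dlnH G l i x + dlnH G j i x * dlnH G i l x - dlnH G j l x * dlnH G j i x"
  have "(pd l (pd i (G j)) x * (2 * G j x) - pd i (G j) x * (2 * pd l (G j) x)) / (2 * G j x)^2 = R"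
    using tsarev[OF x, of j i l] d unfolding pd_dlnH[OF x] R_def by auto
  then have P2: "pd l (pd i (G j)) x = (R * (2 * G j x)^2 + pd i (G j) x * (2 * pd l (G j) x)) / (2 * G j x)"
    using nz by (simp add: field_simps)
  show ?thesis
    unfolding riemann_def S christoffel_distinct[OF d(2) d(1) d(3)[symmetric]] P P2 R_def
    using nz unfolding dlnH_def by (simp add: field_simps power2_eq_square)
qed

lemma riemann_disjoint:
  assumes "i \<noteq> j" "k \<noteq> i" "k \<noteq> j" "l \<noteq> i" "l \<noteq> j"
  shows "riemann G i j k l x = 0"
proof -
  have "christoffel G i k m x * christoffel G m l j x - christoffel G i l m x * christoffel G m k j x = 0" for m
    using assms by (auto simp: christoffel_diag dlnH_def)
  then show ?thesis unfolding riemann_def using christoffel_distinct assms by simp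
qed

theorem curv_vanishing:
  assumes x: "x \<in> U" and nc: "\<not> (i \<noteq> j \<and> {i, j} = {k, l})"
  shows "curv G i j k l x = 0"
proof -
  have partial: "riemann G i j k l x = 0" if "i \<noteq> j" "k \<noteq> l" "l \<notin> {i, j}" for k l
  proof -
    consider "k = i" | "k = j" | "k \<notin> {i, j}" by blast
    then show ?thesis
      by cases (use that riemann_ijil[OF x] riemann_ijjl[OF x] riemann_disjoint in auto)
  qed
  have "riemann G i j k l x = 0"
  proof (cases "i = j \<or> k = l")
    case True then show ?thesis using riemann_iikl[OF x] by (auto simp: riemann_def)
  next
    case False
    then consider "l \<notin> {i, j}" | "k \<notin> {i, j}" using nc by auto
    then show ?thesis
      by cases (use False partial[of k l] partial[of l k] riemann_antisym[of G i j k l] in auto)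
  qed
  then show ?thesis unfolding curv_def by simp
qed

end

section \<open>Reciprocal transformations\<close>

locale reciprocal =
  fixes U :: "(real^'n::finite) set" and v g :: "'n \<Rightarrow> real^'n \<Rightarrow> real"
    and A B M N :: "real^'n \<Rightarrow> real"
  assumes U: "open U"
    and hyp: "strictly_hyperbolic U v"
    and metric: "metric_of_system U v g"
    and claw1: "conservation_law U v B A" and claw2: "conservation_law U v N M"
    and nondeg: "\<forall>u\<in>U. B u * M u - A u * N u \<noteq> 0"
    and denom: "\<forall>u\<in>U. \<forall>i. M u - N u * v i u \<noteq> 0"
begin

abbreviation "gh \<equiv> recip_g g v B A N M"
abbreviation "vh \<equiv> recip_v v B A N M"

definition alpha :: "'n \<Rightarrow> real^'n \<Rightarrow> real" where "alpha l y = M y - N y * v l y"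
definition Delta :: "real^'n \<Rightarrow> real" where "Delta y = B y * M y - A y * N y"

text \<open>rho_l = H_l / hat-H_l, the factor by which the reciprocal metric is rescaled.\<close>
definition rho :: "'n \<Rightarrow> real^'n \<Rightarrow> real" where "rho l y = Delta y / alpha l y"

text \<open>The m-th partial derivative of B + hat-v^l N with hat-v^l frozen.\<close>
definition dcomb :: "'n \<Rightarrow> 'n \<Rightarrow> real^'n \<Rightarrow> real" where
  "dcomb l m y = pd m B y + vh l y * pd m N y"

lemma smooth_v: "smooth_on U (v l)"
  and v_distinct: "y \<in> U \<Longrightarrow> i \<noteq> j \<Longrightarrow> v i y \<noteq> v j y"
  using hyp unfolding strictly_hyperbolic_def by blast+

lemma smooth_g: "smooth_on U (g l)"
  and g_nz: "y \<in> U \<Longrightarrow> g l y \<noteq> 0"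
  and lame_g: "lame_cond U v g"
  using metric unfolding metric_of_system_def diag_metric_def by blast+

lemma smooth_A: "smooth_on U A" and smooth_B: "smooth_on U B"
  and smooth_M: "smooth_on U M" and smooth_N: "smooth_on U N"
  and pd_A: "y \<in> U \<Longrightarrow> pd j A y = v j y * pd j B y"
  and pd_M: "y \<in> U \<Longrightarrow> pd j M y = v j y * pd j N y"
  using claw1 claw2 unfolding conservation_law_def by blast+

lemma alpha_nz: "y \<in> U \<Longrightarrow> alpha l y \<noteq> 0"
  and rho_nz: "y \<in> U \<Longrightarrow> rho l y \<noteq> 0"
  using nondeg denom unfolding Delta_def alpha_def rho_def by auto

lemma dlnH_g_lame: "y \<in> U \<Longrightarrow> l \<noteq> j \<Longrightarrow> pd j (v l) y = dlnH g l j y * (v j y - v l y)"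
  using lame_g v_distinct[of y j l] unfolding lame_cond_def dlnH_def by auto

lemma differentiable_data:
  assumes "y \<in> U"
  shows "v l differentiable (at y)" "g l differentiable (at y)" "A differentiable (at y)"
    "B differentiable (at y)" "M differentiable (at y)" "N differentiable (at y)"
    "pd j (v l) differentiable (at y)" "pd j (g l) differentiable (at y)"
    "pd j B differentiable (at y)" "pd j N differentiable (at y)"
  using smooth_imp_differentiable[OF U _ assms] smooth_v smooth_g smooth_A smooth_B smooth_M smooth_N
    smooth_pd by blast+

lemma vh_alpha: "vh l y = (B y * v l y - A y) / alpha l y"
  unfolding recip_v_def alpha_def ..

lemma gh_rho: "gh = (\<lambda>l y. (1 / rho l y)^2 * g l y)"
  unfolding recip_g_def rho_def alpha_def Delta_def by (intro ext) simp

lemma rho_vh: "y \<in> U \<Longrightarrow> rho l y = B y + N y * vh l y"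
  using alpha_nz[of y l] unfolding rho_def vh_alpha
  by (simp add: field_simps) (simp add: alpha_def Delta_def algebra_simps)

lemma v_rho_vh: "y \<in> U \<Longrightarrow> v l y * rho l y = A y + M y * vh l y"
  using alpha_nz[of y l] unfolding rho_def vh_alpha
  by (simp add: field_simps) (simp add: alpha_def Delta_def algebra_simps)

lemma vh_sub: "y \<in> U \<Longrightarrow> (vh j y - vh l y) * alpha l y = (v j y - v l y) * rho j y"
  using alpha_nz[of y l] alpha_nz[of y j] unfolding rho_def vh_alpha
  by (simp add: field_simps) (simp add: alpha_def Delta_def, algebra)

lemma vh_distinct: "y \<in> U \<Longrightarrow> i \<noteq> j \<Longrightarrow> vh i y \<noteq> vh j y"
  using vh_sub[of y i j] v_distinct[of y i j] alpha_nz[of y j] rho_nz[of y i] by auto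

lemma smooth_alpha: "smooth_on U (alpha l)"
  unfolding alpha_def[abs_def] by (intro smooth_diff[OF U] smooth_mult[OF U] smooth_M smooth_N smooth_v)

lemma smooth_rho: "smooth_on U (rho l)"
  unfolding rho_def[abs_def] Delta_def
  by (intro smooth_divide[OF U] smooth_diff[OF U] smooth_mult[OF U] smooth_A smooth_B smooth_M
      smooth_N smooth_alpha ballI alpha_nz)

lemma smooth_vh: "smooth_on U (vh l)"
  unfolding vh_alpha[abs_def]
  by (intro smooth_divide[OF U] smooth_diff[OF U] smooth_mult[OF U] smooth_A smooth_B smooth_v
      smooth_alpha ballI alpha_nz)

lemma smooth_gh: "smooth_on U (gh l)"
  unfolding gh_rho power2_eq_square
  by (intro smooth_mult[OF U] smooth_divide[OF U] smooth_const smooth_rho smooth_g ballI rho_nz)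

lemma gh_nz: "y \<in> U \<Longrightarrow> gh l y \<noteq> 0"
  using rho_nz[of y l] g_nz[of y l] unfolding gh_rho by simp

lemma pd_vh:
  assumes y: "y \<in> U" and lj: "l \<noteq> j"
  shows "pd j (vh l) y * alpha l y = (v j y - v l y) * (rho l y * dlnH g l j y - dcomb l j y)"
proof -
  have alpha: "pd j (alpha l) y = v j y * pd j N y - (pd j N y * v l y + N y * pd j (v l) y)"
    unfolding alpha_def[abs_def] using differentiable_data[OF y] pd_M[OF y] by simp
  have vh: "pd j (vh l) y = ((pd j B y * v l y + B y * pd j (v l) y - v j y * pd j B y) * alpha l y
      - (B y * v l y - A y) * pd j (alpha l) y) / (alpha l y)^2"
    unfolding vh_alpha[abs_def]
    using differentiable_data[OF y] smooth_imp_differentiable[OF U smooth_alpha y] alpha_nz[OF y] pd_A[OF y]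
    by simp
  show ?thesis
    unfolding vh alpha dlnH_g_lame[OF y lj] rho_def dcomb_def vh_alpha using alpha_nz[OF y, of l]
    by (simp add: field_simps power2_eq_square) (unfold alpha_def Delta_def, algebra)
qed

lemma pd_vh_rho:
  assumes y: "y \<in> U" and lj: "l \<noteq> j"
  shows "rho j y * pd j (vh l) y = (vh j y - vh l y) * (rho l y * dlnH g l j y - dcomb l j y)"
proof -
  have "(rho j y * pd j (vh l) y) * alpha l y = rho j y * (pd j (vh l) y * alpha l y)"
    by simp
  also have "\<dots> = ((v j y - v l y) * rho j y) * (rho l y * dlnH g l j y - dcomb l j y)"
    unfolding pd_vh[OF y lj] by simp
  also have "\<dots> = ((vh j y - vh l y) * (rho l y * dlnH g l j y - dcomb l j y)) * alpha l y"
    unfolding vh_sub[OF y, of j l, symmetric] by simp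
  finally show ?thesis using alpha_nz[OF y] by simp
qed

lemma pd_rho:
  assumes y: "y \<in> U"
  shows "pd j (rho l) y = dcomb l j y + N y * pd j (vh l) y"
proof -
  have "pd j (rho l) y = pd j (\<lambda>y. B y + N y * vh l y) y"
    by (rule pd_local[OF U y]) (use rho_vh in auto)
  then show ?thesis
    using differentiable_data[OF y] smooth_imp_differentiable[OF U smooth_vh y] unfolding dcomb_def by simp
qed

lemma dlnH_gh:
  assumes y: "y \<in> U"
  shows "dlnH gh l j y = dlnH g l j y - pd j (rho l) y / rho l y"
proof -
  have rho: "rho l differentiable (at y)" using smooth_imp_differentiable[OF U smooth_rho y] .
  then have "(\<lambda>y. 1 / rho l y) differentiable (at y)" using rho_nz[OF y] by simp
  moreover have "pd j (\<lambda>y. 1 / rho l y) y = - pd j (rho l) y / (rho l y)^2"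
    using pd_divide[of "\<lambda>y. 1" y "rho l" j] rho rho_nz[OF y] by simp
  ultimately show ?thesis
    unfolding gh_rho using dlnH_rescale[of "\<lambda>l y. 1 / rho l y" l y g j] rho_nz[OF y] g_nz[OF y]
      differentiable_data[OF y] by (simp add: power2_eq_square)
qed

lemma dlnH_gh_offdiag:
  assumes y: "y \<in> U" and lj: "l \<noteq> j"
  shows "rho j y * dlnH gh l j y = rho l y * dlnH g l j y - dcomb l j y"
proof -
  have NN: "N y * (vh j y - vh l y) = rho j y - rho l y" using rho_vh[OF y] by (simp add: algebra_simps)
  have "rho l y * (rho j y * dlnH gh l j y)
      = rho l y * rho j y * dlnH g l j y - rho j y * dcomb l j y - N y * (rho j y * pd j (vh l) y)"
    unfolding dlnH_gh[OF y] pd_rho[OF y] using rho_nz[OF y, of l] by (simp add: field_simps)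
  also have "\<dots> = rho l y * (rho l y * dlnH g l j y - dcomb l j y)"
    unfolding pd_vh_rho[OF y lj] mult.assoc[symmetric] NN by (simp add: algebra_simps)
  finally show ?thesis using rho_nz[OF y, of l] by simp
qed

lemma lame_gh: "lame_cond U vh gh"
  unfolding lame_cond_def
proof (intro ballI allI impI)
  fix y and l j :: 'n assume y: "y \<in> U" and lj: "l \<noteq> j"
  have "rho j y * (dlnH gh l j y * (vh j y - vh l y)) = (rho j y * dlnH gh l j y) * (vh j y - vh l y)"
    by simp
  also have "\<dots> = rho j y * pd j (vh l) y"
    unfolding dlnH_gh_offdiag[OF y lj] pd_vh_rho[OF y lj] by simp
  finally have "rho j y * (dlnH gh l j y * (vh j y - vh l y)) = rho j y * pd j (vh l) y" .
  then have "dlnH gh l j y * (vh j y - vh l y) = pd j (vh l) y" using rho_nz[OF y] by simp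
  then show "pd j (gh l) y / (2 * gh l y) = pd j (vh l) y / (vh j y - vh l y)"
    using vh_distinct[OF y lj[symmetric]] unfolding dlnH_def by (simp add: field_simps)
qed

sublocale hat: lame_system U gh vh
  by unfold_locales (use U smooth_gh smooth_vh gh_nz vh_distinct lame_gh in auto)

end

section \<open>The curvature of the reciprocal metric\<close>

text \<open>Here ri, rk stand for rho_i, rho_k,
  a, ah for dlnH_ki of g and of the reciprocal metric, aii, ahii for dlnH_ii, dri, drk, da, dah
  for the i-th derivatives of rho_i, rho_k, a, ah, dvk for d_i hat-v^k, and b, n, bb, nn for the
  first and second i-th derivatives of B and N.  The hypotheses are the transformation rule of
  dlnH and its i-th derivative, the rescaling of dlnH_ii, the derivative of rho_k = B + N hat-v^k,
  the reciprocal Lame equation and rho_i - rho_k = N (hat-v^i - hat-v^k).  The proof rewrites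
  ri^2 lame_second through Y = ri ah, then uses that ri times the Lame equation is
  ri dvk = (vi - vk) Y.\<close>

lemma lame_second_algebra:
  fixes ri rk vi vk N a ah aii ahii dri drk dah da dvk b n bb nn c ci :: real
  assumes ri: "ri \<noteq> 0"
    and c: "c = b + vk * n" and ci: "ci = b + vi * n"
    and rule: "ri * ah = rk * a - c"
    and rule_deriv: "dri * ah + ri * dah = drk * a + rk * da - (bb + dvk * n + vk * nn)"
    and diag: "ahii = aii - dri / ri"
    and drk: "drk = c + N * dvk"
    and lame_hat: "ah * (vi - vk) = dvk"
    and rho_diff: "ri = rk - N * (vk - vi)"
  shows "ri^2 * (dah + ah^2 - ah * ahii) - ri * rk * (da + a^2 - a * aii)
       = - (ri * (bb + vk * nn - aii * c) + rk * a * ci - ci * c)"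
proof -
  have lame_Y: "ri * dvk = (vi - vk) * (rk * a - c)"
    unfolding lame_hat[symmetric] rule[symmetric] by simp
  have "ri^2 * (dah + ah^2 - ah * ahii)
      = ri * (dri * ah + ri * dah) + (ri * ah)^2 - ri * aii * (ri * ah)"
    using ri unfolding diag by (simp add: field_simps power2_eq_square)
  also have "\<dots> = ri * c * a + N * a * (ri * dvk) - (ri * dvk) * n - ri * (bb + vk * nn)
      + (rk * a - c)^2 - ri * aii * (rk * a - c) + ri * rk * da"
    unfolding rule_deriv rule drk by (simp add: algebra_simps)
  finally show ?thesis
    unfolding lame_Y unfolding rho_diff c ci by (simp add: algebra_simps power2_eq_square)
qed

text \<open>Inserting a curvature of the form w1_i + w1_k + w2_i v^k + w2_k v^i into the transformation
  law: the terms in w, T, Z, P, S regroup by rho_l = B + N hat-v^l and v^l rho_l = A + M hat-v^l.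
  Here LBi, LNi, ... stand for the Laplacian terms, GB, GN, GNB for the gradient terms.\<close>

lemma curvature_form_algebra:
  fixes ri rk vi vk hvi hvk B A N M w1i w1k w2i w2k T1 T2 Z1 Z2 P S LBi LBk LNi LNk GB GN GNB :: real
  assumes Ei: "ri = B + N * hvi" and Ek: "rk = B + N * hvk"
    and Fi: "vi * ri = A + M * hvi" and Fk: "vk * rk = A + M * hvk"
    and PS: "P + S = GNB + T1 * N + T2 * M + Z1 * B + Z2 * A"
  shows "ri * rk * (w1i + w1k + w2i * vk + w2k * vi) + ri * (LBi + hvk * LNi) + rk * (LBk + hvi * LNk)
      - (hvi * hvk * GN + GB + (hvi + hvk) * GNB)
    = (ri * (LNi + w1i * N + Z1 + w2i * M + vi * Z2) - P - hvi * (GN / 2 + N * Z1 + M * Z2)) * hvk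
      + (rk * (LNk + w1k * N + Z1 + w2k * M + vk * Z2) - P - hvk * (GN / 2 + N * Z1 + M * Z2)) * hvi
      + (ri * (LBi + w1i * B + T1 + w2i * A + vi * T2) - (GB / 2 + B * T1 + A * T2) - hvi * S)
      + (rk * (LBk + w1k * B + T1 + w2k * A + vk * T2) - (GB / 2 + B * T1 + A * T2) - hvk * S)"
proof -
  have "S = GNB + T1 * N + T2 * M + Z1 * B + Z2 * A - P" using PS by simp
  then show ?thesis using Ei Ek Fi Fk by algebra
qed

context reciprocal
begin

lemma smooth_dlnH_g: "smooth_on U (dlnH g l j)"
  and smooth_dlnH_gh: "smooth_on U (dlnH gh l j)"
  using smooth_dlnH[OF U] smooth_g smooth_gh g_nz gh_nz by blast+

text \<open>Transformation of the diagonal part of R^{ik}_{ik}: differentiate the transformation rule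
  of dlnH_ki in direction i and feed the result into lame_second_algebra.\<close>

lemma lame_second_gh:
  assumes x: "x \<in> U" and ki: "k \<noteq> i"
  shows "(rho i x)^2 * lame_second gh k i x = rho i x * rho k x * lame_second g k i x
     - (rho i x * (pd i (pd i B) x + vh k x * pd i (pd i N) x - dlnH g i i x * dcomb k i x)
          + rho k x * dlnH g k i x * dcomb i i x - dcomb i i x * dcomb k i x)"
proof -
  note d = differentiable_data[OF x] smooth_imp_differentiable[OF U smooth_rho x]
    smooth_imp_differentiable[OF U smooth_vh x] smooth_imp_differentiable[OF U smooth_dlnH_g x]
    smooth_imp_differentiable[OF U smooth_dlnH_gh x]
  have "pd i (\<lambda>y. rho i y * dlnH gh k i y) x
      = pd i (\<lambda>y. rho k y * dlnH g k i y - (pd i B y + vh k y * pd i N y)) x"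
    by (rule pd_local[OF U x]) (use dlnH_gh_offdiag ki in \<open>auto simp: dcomb_def\<close>)
  then have DY: "pd i (rho i) x * dlnH gh k i x + rho i x * pd i (dlnH gh k i) x
      = pd i (rho k) x * dlnH g k i x + rho k x * pd i (dlnH g k i) x
        - (pd i (pd i B) x + pd i (vh k) x * pd i N x + vh k x * pd i (pd i N) x)"
    using d by (simp add: algebra_simps)
  have LH: "dlnH gh k i x * (vh i x - vh k x) = pd i (vh k) x"
    using hat.dlnH_lame[OF x ki] vh_distinct[OF x ki] by simp
  have rr: "rho i x = rho k x - N x * (vh k x - vh i x)"
    using rho_vh[OF x, of i] rho_vh[OF x, of k] by (simp add: algebra_simps)
  show ?thesis
    using lame_second_algebra[OF rho_nz[OF x] dcomb_def dcomb_def dlnH_gh_offdiag[OF x ki] DY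
          dlnH_gh[OF x] pd_rho[OF x] LH rr]
    unfolding lame_second_def by simp
qed

lemma offdiag_term_gh:
  assumes x: "x \<in> U" and m: "m \<noteq> i" "m \<noteq> k"
  shows "dlnH gh i m x * dlnH gh k m x / gh m x
     = rho i x * rho k x * (dlnH g i m x * dlnH g k m x / g m x)
       - rho i x * (dlnH g i m x * dcomb k m x / g m x) - rho k x * (dlnH g k m x * dcomb i m x / g m x)
       + dcomb i m x * dcomb k m x / g m x"
proof -
  have "dlnH gh i m x * dlnH gh k m x / gh m x
      = (rho m x * dlnH gh i m x) * (rho m x * dlnH gh k m x) / g m x"
    using rho_nz[OF x, of m] g_nz[OF x, of m] unfolding gh_rho by (simp add: field_simps power2_eq_square)
  also have "\<dots> = (rho i x * dlnH g i m x - dcomb i m x) * (rho k x * dlnH g k m x - dcomb k m x) / g m x"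
    unfolding dlnH_gh_offdiag[OF x m(1)[symmetric]] dlnH_gh_offdiag[OF x m(2)[symmetric]] ..
  also have "\<dots> = rho i x * rho k x * (dlnH g i m x * dlnH g k m x / g m x)
       - rho i x * (dlnH g i m x * dcomb k m x / g m x) - rho k x * (dlnH g k m x * dcomb i m x / g m x)
       + dcomb i m x * dcomb k m x / g m x"
    using g_nz[OF x, of m] by (simp add: field_simps)
  finally show ?thesis .
qed

lemma offdiag_sum_gh:
  assumes x: "x \<in> U"
  shows "(\<Sum>m\<in>UNIV - {i, k}. dlnH gh i m x * dlnH gh k m x / gh m x)
     = rho i x * rho k x * (\<Sum>m\<in>UNIV - {i, k}. dlnH g i m x * dlnH g k m x / g m x)
       - rho i x * (\<Sum>m\<in>UNIV - {i, k}. dlnH g i m x * dcomb k m x / g m x)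
       - rho k x * (\<Sum>m\<in>UNIV - {i, k}. dlnH g k m x * dcomb i m x / g m x)
       + (\<Sum>m\<in>UNIV - {i, k}. dcomb i m x * dcomb k m x / g m x)"
  unfolding sum_distrib_left sum_subtractf[symmetric] sum.distrib[symmetric]
  by (rule sum.cong) (use offdiag_term_gh[OF x] in auto)

lemma lap_comb_split:
  assumes x: "x \<in> U" and ik: "i \<noteq> k"
  shows "lap_ii g i B x + vh k x * lap_ii g i N x
     = (pd i (pd i B) x + vh k x * pd i (pd i N) x - dlnH g i i x * dcomb k i x) / g i x
       + dlnH g i k x * dcomb k k x / g k x
       + (\<Sum>m\<in>UNIV - {i, k}. dlnH g i m x * dcomb k m x / g m x)"
proof -
  note lap = lap_ii_expand[where g=g and x=x, OF g_nz[OF x]]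
  have sum: "(\<Sum>m\<in>UNIV - {i}. dlnH g i m x * pd m B x / g m x)
        + vh k x * (\<Sum>m\<in>UNIV - {i}. dlnH g i m x * pd m N x / g m x)
      = (\<Sum>m\<in>UNIV - {i}. dlnH g i m x * dcomb k m x / g m x)"
    unfolding sum_distrib_left sum.distrib[symmetric] dcomb_def
    by (rule sum.cong) (auto simp: add_divide_distrib algebra_simps)
  have "UNIV - {i} - {k} = UNIV - {i, k}" by auto
  then have split: "(\<Sum>m\<in>UNIV - {i}. dlnH g i m x * dcomb k m x / g m x)
      = dlnH g i k x * dcomb k k x / g k x + (\<Sum>m\<in>UNIV - {i, k}. dlnH g i m x * dcomb k m x / g m x)"
    using ik sum.remove[of "UNIV - {i}" k] by simp
  have "lap_ii g i B x + vh k x * lap_ii g i N x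
      = (pd i (pd i B) x + vh k x * pd i (pd i N) x - dlnH g i i x * dcomb k i x) / g i x
        + ((\<Sum>m\<in>UNIV - {i}. dlnH g i m x * pd m B x / g m x)
        + vh k x * (\<Sum>m\<in>UNIV - {i}. dlnH g i m x * pd m N x / g m x))"
    unfolding lap[of i B] lap[of i N] dcomb_def using g_nz[OF x, of i] by (simp add: field_simps)
  then show ?thesis unfolding sum split by simp
qed

lemma grad_comb_split:
  assumes ik: "i \<noteq> k"
  shows "vh i x * vh k x * grad_sq g N x + grad_sq g B x + (vh i x + vh k x) * grad_inner g N B x
     = dcomb i i x * dcomb k i x / g i x + dcomb i k x * dcomb k k x / g k x
       + (\<Sum>m\<in>UNIV - {i, k}. dcomb i m x * dcomb k m x / g m x)"
proof -
  have "vh i x * vh k x * grad_sq g N x + grad_sq g B x + (vh i x + vh k x) * grad_inner g N B x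
      = (\<Sum>m\<in>UNIV. dcomb i m x * dcomb k m x / g m x)"
    unfolding grad_sq_def grad_inner_def sum_distrib_left sum.distrib[symmetric] dcomb_def
    by (rule sum.cong) (auto simp: add_divide_distrib algebra_simps power2_eq_square)
  then show ?thesis unfolding sum_split2[OF ik] .
qed

text \<open>Both sides are
  expanded by curv_ikik_formula and lap_ii_expand; the diagonal parts match by lame_second_gh, the
  summands over m \<notin> {i, k} by offdiag_sum_gh.\<close>

theorem curvature_law:
  assumes x: "x \<in> U" and ik: "i \<noteq> k"
  shows "curv gh i k i k x = rho i x * rho k x * curv g i k i k x
     + rho i x * (lap_ii g i B x + vh k x * lap_ii g i N x)
     + rho k x * (lap_ii g k B x + vh i x * lap_ii g k N x)
     - (vh i x * vh k x * grad_sq g N x + grad_sq g B x + (vh i x + vh k x) * grad_inner g N B x)"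
proof -
  have ki: "k \<noteq> i" using ik by simp
  have div_gh: "y / gh l x = (rho l x)^2 * y / g l x" for y l
    unfolding gh_rho using rho_nz[OF x, of l] by (simp add: field_simps)
  note curv_g = curv_ikik_formula[OF ik differentiable_data(2)[OF x] differentiable_data(2)[OF x]
      differentiable_data(8)[OF x] differentiable_data(8)[OF x] g_nz[OF x]]
  note curv_gh = curv_ikik_formula[OF ik hat.diff_G[OF x] hat.diff_G[OF x] hat.diff_pd_G[OF x]
      hat.diff_pd_G[OF x] gh_nz[OF x]]
  have sets: "UNIV - {k, i} = UNIV - {i, k}" by auto
  have "curv gh i k i k x = - ((rho i x)^2 * lame_second gh k i x) / g i x
      - ((rho k x)^2 * lame_second gh i k x) / g k x
      - (\<Sum>m\<in>UNIV - {i, k}. dlnH gh i m x * dlnH gh k m x / gh m x)"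
    unfolding curv_gh div_gh[of _ i] div_gh[of _ k] by simp
  also have "\<dots> = rho i x * rho k x * curv g i k i k x
     + rho i x * (lap_ii g i B x + vh k x * lap_ii g i N x)
     + rho k x * (lap_ii g k B x + vh i x * lap_ii g k N x)
     - (vh i x * vh k x * grad_sq g N x + grad_sq g B x + (vh i x + vh k x) * grad_inner g N B x)"
    unfolding curv_g offdiag_sum_gh[OF x] lame_second_gh[OF x ki] lame_second_gh[OF x ik]
      lap_comb_split[OF x ik] lap_comb_split[OF x ki] grad_comb_split[OF ik] sets
    using g_nz[OF x, of i] g_nz[OF x, of k]
    by (simp add: field_simps)
  finally show ?thesis .
qed

lemma reciprocal_curvature_ikik:
  fixes w1 w2 :: "'n \<Rightarrow> real^'n \<Rightarrow> real" and T1 T2 Z1 Z2 P S :: "real^'n \<Rightarrow> real"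
  assumes u: "u \<in> U" and ik: "i \<noteq> k"
    and curv_form: "curv g i k i k u = w1 i u + w1 k u + w2 i u * v k u + w2 k u * v i u"
    and PS: "P u + S u = grad_inner g N B u + T1 u * N u + T2 u * M u + Z1 u * B u + Z2 u * A u"
  shows "let nn = (\<lambda>i. lap_ii g i N u + w1 i u * N u + Z1 u + w2 i u * M u + v i u * Z2 u);
            bb = (\<lambda>i. lap_ii g i B u + w1 i u * B u + T1 u + w2 i u * A u + v i u * T2 u);
            Q = grad_sq g B u / 2 + B u * T1 u + A u * T2 u;
            RR = grad_sq g N u / 2 + N u * Z1 u + M u * Z2 u;
            hv = (\<lambda>i. vh i u);
            ratio = (\<lambda>i. (B u * M u - A u * N u) / (M u - N u * v i u));
            hn = (\<lambda>i. ratio i * nn i - P u - hv i * RR);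
            hb = (\<lambda>i. ratio i * bb i - Q - hv i * S u)
        in curv gh i k i k u = hn i * hv k + hn k * hv i + hb i + hb k"
proof -
  have ratio: "(B u * M u - A u * N u) / (M u - N u * v l u) = rho l u" for l
    unfolding rho_def Delta_def alpha_def ..
  show ?thesis
    unfolding Let_def ratio curvature_law[OF u ik] curv_form
    by (rule curvature_form_algebra[OF rho_vh[OF u] rho_vh[OF u] v_rho_vh[OF u] v_rho_vh[OF u] PS])
qed

end

theorem theorem3p2:
  fixes U :: "(real^'n) set"
    and v g w1 w2 :: "'n \<Rightarrow> real^'n \<Rightarrow> real"
    and A B M N T1 T2 Z1 Z2 P S :: "real^'n \<Rightarrow> real"
  assumes U_open: "open U"
    and hyp: "strictly_hyperbolic U v"
    and DN: "DN_system U v"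
    and metric: "metric_of_system U v g"
    and aff1: "is_affinor U g w1"
    and aff2: "is_affinor U g w2"
    and curvR: "\<forall>u\<in>U. \<forall>i k. i \<noteq> k \<longrightarrow>
        curv g i k i k u = w1 i u + w1 k u + w2 i u * v k u + w2 k u * v i u"
    and claw1: "conservation_law U v B A"
    and claw2: "conservation_law U v N M"
    and nondeg: "\<forall>u\<in>U. B u * M u - A u * N u \<noteq> 0"
    and denom: "\<forall>u\<in>U. \<forall>i. M u - N u * v i u \<noteq> 0"
    and T1: "smooth_on U T1" "\<forall>u\<in>U. \<forall>i. pd i T1 u = w1 i u * pd i B u"
    and T2: "smooth_on U T2" "\<forall>u\<in>U. \<forall>i. pd i T2 u = w2 i u * pd i B u"
    and Z1: "smooth_on U Z1" "\<forall>u\<in>U. \<forall>i. pd i Z1 u = w1 i u * pd i N u"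
    and Z2: "smooth_on U Z2" "\<forall>u\<in>U. \<forall>i. pd i Z2 u = w2 i u * pd i N u"
    and PS: "\<forall>u\<in>U. P u + S u = grad_inner g N B u + T1 u * N u + T2 u * M u
                                 + Z1 u * B u + Z2 u * A u"
  shows "\<forall>u\<in>U.
     (\<forall>i j k l. \<not> (i \<noteq> j \<and> {i, j} = {k, l}) \<longrightarrow>
         curv (recip_g g v B A N M) i j k l u = 0) \<and>
     (\<forall>i k. i \<noteq> k \<longrightarrow>
       (let nn = (\<lambda>i. lap_ii g i N u + w1 i u * N u + Z1 u + w2 i u * M u + v i u * Z2 u);
            bb = (\<lambda>i. lap_ii g i B u + w1 i u * B u + T1 u + w2 i u * A u + v i u * T2 u);
            Q = grad_sq g B u / 2 + B u * T1 u + A u * T2 u;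
            RR = grad_sq g N u / 2 + N u * Z1 u + M u * Z2 u;
            hv = (\<lambda>i. recip_v v B A N M i u);
            ratio = (\<lambda>i. (B u * M u - A u * N u) / (M u - N u * v i u));
            hn = (\<lambda>i. ratio i * nn i - P u - hv i * RR);
            hb = (\<lambda>i. ratio i * bb i - Q - hv i * S u)
        in curv (recip_g g v B A N M) i k i k u = hn i * hv k + hn k * hv i + hb i + hb k))"
proof -
  interpret reciprocal U v g A B M N
    by unfold_locales (use U_open hyp metric claw1 claw2 nondeg denom in auto)
  show ?thesis
    by (intro ballI conjI allI impI hat.curv_vanishing reciprocal_curvature_ikik)
      (use curvR PS in auto)
qed

end
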